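(* Assume conditions (i) and (ii) of the context. There exists a polynomial $h_1:\mathbb R^3\to\mathbb R$ such that for all $d\in\mathbb N$, every architecture $a$ with input dimension $d$, every $R\in(0,\infty)$, all $K,D\in[1,\infty)$ and every $\varepsilon\in(0,1)$ with $K\ge h_1(\varepsilon^{-1},d,D)$, it holds with $\mathcal H=\mathcal N_{a,R,D}$ that $$\sup_{f\in\mathcal H}\big|\mathcal E_d^{(K)}(f)-\mathcal E_d(f)\big|\le\varepsilon.$$
   Context: Fix $T\in(0,\infty)$ and reals $u<v$. For each $d\in\mathbb N$: $\mu_d:\mathbb R^d\to\mathbb R^d$, $\sigma_d:\mathbb R^d\to\mathbb R^{d\times d}$ Lipschitz, $\varphi_d:\mathbb R^d\to\mathbb R$ measurable; on a filtered probability space, $B$ a standard $d$-dimensional Brownian motion, $X_d$ uniform on $[u,v]^d$ and $\mathcal F_0$-measurable, $S_t=X_d+\int_0^t\mu_d(S_s)ds+\int_0^t\sigma_d(S_s)dB_s$, $Y_d=S_T=(Y_{d,1},\dots,Y_{d,d})$. Risk $\mathcal E_d(f)=\mathbb E[(f(X_d)-\varphi_d(Y_d))^2]$; truncation $\varphi_d^{(K)}(x)=\mathbf 1\{\|x\|_\infty\le K\}\varphi_d(x)$ and $\mathcal E_d^{(K)}(f)=\mathbb E[(f(X_d)-\varphi_d^{(K)}(Y_d))^2]$. Conditions: (i) there is $c_1\in(0,\infty)$ with $\mathbb P(|Y_{d,i}|\ge t)\le2\exp\{-c_1(\log t)^2\}$ for all $d$, $t\ge1$, $i\le d$; (ii)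 there are $c_2\in(0,\infty)$, $\lambda\in[2,\infty)$ with $|\varphi_d(y)|\le c_2(1+\|y\|_2^\lambda)$ for all $d$, $y\in\mathbb R^d$. ReLU networks: for $L\in\mathbb N$ and architecture $a=(N_0,N_1,\dots,N_L)$ with $N_0=d$, $N_L=1$, parameters $\theta=((A_1,b_1),\dots,(A_L,b_L))$, $A_l\in\mathbb R^{N_l\times N_{l-1}}$, $b_l\in\mathbb R^{N_l}$, realize $\Phi_\theta=W_L\circ\rho\circ W_{L-1}\circ\cdots\circ\rho\circ W_1$ with $W_l(x)=A_lx+b_l$ and $\rho$ the componentwise ReLU $\max\{\cdot,0\}$; $\|\theta\|_\infty$ is the maximal absolute entry; $P(a)=\sum_{l=1}^L N_l(N_{l-1}+1)$; $\mathcal N_{a,R}=\{\Phi_\theta|_{[u,v]^d}:\|\theta\|_\infty\le R\}$; $\mathrm{Clip}_D(x)=\min\{|x|,D\}\operatorname{sgn}(x)$; $\mathcal N_{a,R,D}=\{\mathrm{Clip}_D\circ\Phi:\Phi\in\mathcal N_{a,R}\}$. *)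

theory Defs
  imports "HOL-Probability.Probability"
begin

text \<open>Vectors in R^d are represented as functions nat => real; only indices i < d matter.\<close>

definition sup_norm :: "nat \<Rightarrow> (nat \<Rightarrow> real) \<Rightarrow> real" where
  "sup_norm d y = Max (insert 0 ((\<lambda>i. \<bar>y i\<bar>) ` {..<d}))"

definition l2_norm :: "nat \<Rightarrow> (nat \<Rightarrow> real) \<Rightarrow> real" where
  "l2_norm d y = sqrt (\<Sum>i<d. (y i)\<^sup>2)"

definition is_poly3 :: "(real \<Rightarrow> real \<Rightarrow> real \<Rightarrow> real) \<Rightarrow> bool" where
  "is_poly3 h \<longleftrightarrow> (\<exists>N (c :: nat \<Rightarrow> nat \<Rightarrow> nat \<Rightarrow> real).
      \<forall>x y z. h x y z = (\<Sum>i\<le>N. \<Sum>j\<le>N. \<Sum>k\<le>N. c i j k * x ^ i * y ^ j * z ^ k))"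

type_synonym layer = "(nat \<Rightarrow> nat \<Rightarrow> real) \<times> (nat \<Rightarrow> real)"

definition affine :: "nat \<Rightarrow> layer \<Rightarrow> (nat \<Rightarrow> real) \<Rightarrow> (nat \<Rightarrow> real)" where
  "affine n L x = (\<lambda>i. (\<Sum>j<n. fst L i j * x j) + snd L i)"

definition relu_vec :: "(nat \<Rightarrow> real) \<Rightarrow> (nat \<Rightarrow> real)" where
  "relu_vec x = (\<lambda>i. max (x i) 0)"

text \<open>realize [N0,...,NL] [(A1,b1),...,(AL,bL)] = W_L o rho o ... o rho o W_1\<close>
fun realize :: "nat list \<Rightarrow> layer list \<Rightarrow> (nat \<Rightarrow> real) \<Rightarrow> (nat \<Rightarrow> real)" where
  "realize (n # ns) [L] x = affine n L x"
| "realize (n # ns) (L # Ls) x = realize ns Ls (relu_vec (affine n L x))"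
| "realize _ _ x = x"

definition valid_arch :: "nat \<Rightarrow> nat list \<Rightarrow> bool" where
  "valid_arch d a \<longleftrightarrow> length a \<ge> 2 \<and> hd a = d \<and> last a = 1 \<and> (\<forall>n\<in>set a. n > 0)"

definition params_bounded :: "nat list \<Rightarrow> layer list \<Rightarrow> real \<Rightarrow> bool" where
  "params_bounded a \<theta> R \<longleftrightarrow> length \<theta> = length a - 1 \<and>
     (\<forall>l < length \<theta>. (\<forall>i < a ! (l+1). \<forall>j < a ! l. \<bar>fst (\<theta> ! l) i j\<bar> \<le> R)
                      \<and> (\<forall>i < a ! (l+1). \<bar>snd (\<theta> ! l) i\<bar> \<le> R))"

definition clip :: "real \<Rightarrow> real \<Rightarrow> real" where
  "clip D x = min \<bar>x\<bar> D * sgn x"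

text \<open>The class N_{a,R,D} (functions are only ever evaluated on [u,v]^d).\<close>
definition NN_clip :: "nat list \<Rightarrow> real \<Rightarrow> real \<Rightarrow> ((nat \<Rightarrow> real) \<Rightarrow> real) set" where
  "NN_clip a R D = {(\<lambda>x. clip D (realize a \<theta> x 0)) | \<theta>. params_bounded a \<theta> R}"

definition trunc :: "nat \<Rightarrow> real \<Rightarrow> ((nat \<Rightarrow> real) \<Rightarrow> real) \<Rightarrow> (nat \<Rightarrow> real) \<Rightarrow> real" where
  "trunc d K g y = (if sup_norm d y \<le> K then g y else 0)"

definition risk :: "'a measure \<Rightarrow> ('a \<Rightarrow> nat \<Rightarrow> real) \<Rightarrow> ('a \<Rightarrow> nat \<Rightarrow> real)
     \<Rightarrow> ((nat \<Rightarrow> real) \<Rightarrow> real) \<Rightarrow> ((nat \<Rightarrow> real) \<Rightarrow> real) \<Rightarrow> real" where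
  "risk M X Y g f = (LINT \<omega>|M. (f (X \<omega>) - g (Y \<omega>))\<^sup>2)"

end

theory Submission
  imports Defs
begin

(* Off the cube {||y||_inf <= K} the truncated and the untruncated squared losses differ by at
   most D^2 + 2 phi(y)^2, and the growth condition (ii) bounds phi(y)^2 by
   4 c2^2 d^N max(1, ||y||_inf)^N for an integer N >= 2 lam.  Since ||y||_inf > K >= 1 there,
   ||y||_inf^N <= ||y||_inf^(N+1) / K <= (sum_i |y_i|^(N+1)) / K.  The log-normal tails (i) give
   every coordinate Y_i a finite (N+1)-st moment C that does not depend on d, so the two risks
   differ by at most (D^2 + 8 c2^2 d^N) d C / K, which is at most eps as soon as
   K >= h1(1/eps, d, D) := (D^2 + 8 c2^2 d^N) d C / eps. *)

section \<open>Polynomials in three variables\<close>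

lemma poly3_sum_pad:
  fixes c :: "nat \<Rightarrow> nat \<Rightarrow> nat \<Rightarrow> real"
  assumes "N \<le> N'"
  shows "(\<Sum>i\<le>N. \<Sum>j\<le>N. \<Sum>k\<le>N. c i j k * x ^ i * y ^ j * z ^ k)
       = (\<Sum>i\<le>N'. \<Sum>j\<le>N'. \<Sum>k\<le>N'.
            (if i \<le> N \<and> j \<le> N \<and> k \<le> N then c i j k else 0) * x ^ i * y ^ j * z ^ k)"
  using assms by (intro sum.mono_neutral_cong_left) (auto intro!: sum.neutral)

lemma is_poly3_add:
  assumes "is_poly3 f" "is_poly3 g"
  shows "is_poly3 (\<lambda>x y z. f x y z + g x y z)"
proof -
  obtain N c where f: "\<And>x y z. f x y z = (\<Sum>i\<le>N. \<Sum>j\<le>N. \<Sum>k\<le>N. c i j k * x ^ i * y ^ j * z ^ k)"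
    using assms(1) unfolding is_poly3_def by blast
  obtain N' c' where g: "\<And>x y z. g x y z = (\<Sum>i\<le>N'. \<Sum>j\<le>N'. \<Sum>k\<le>N'. c' i j k * x ^ i * y ^ j * z ^ k)"
    using assms(2) unfolding is_poly3_def by blast
  define e where "e i j k = (if i \<le> N \<and> j \<le> N \<and> k \<le> N then c i j k else 0)
                         + (if i \<le> N' \<and> j \<le> N' \<and> k \<le> N' then c' i j k else 0)" for i j k
  have "f x y z + g x y z = (\<Sum>i\<le>max N N'. \<Sum>j\<le>max N N'. \<Sum>k\<le>max N N'. e i j k * x ^ i * y ^ j * z ^ k)"
    for x y z
    unfolding f g e_def
    by (simp only: poly3_sum_pad[of N "max N N'"] poly3_sum_pad[of N' "max N N'"] max.cobounded1
        max.cobounded2 distrib_right sum.distrib)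
  then show ?thesis unfolding is_poly3_def by blast
qed

lemma is_poly3_monomial: "is_poly3 (\<lambda>x y z. a * x ^ i * y ^ j * z ^ k)"
  unfolding is_poly3_def
proof (intro exI allI)
  fix x y z :: real
  define N where "N = max i (max j k)"
  let ?c = "\<lambda>i' j' k'. if i' = i \<and> j' = j \<and> k' = k then a else 0"
  have "a * x ^ i * y ^ j * z ^ k
      = (\<Sum>i'\<in>{i}. \<Sum>j'\<in>{j}. \<Sum>k'\<in>{k}. ?c i' j' k' * x ^ i' * y ^ j' * z ^ k')"
    by simp
  also have "\<dots> = (\<Sum>i'\<le>N. \<Sum>j'\<le>N. \<Sum>k'\<le>N. ?c i' j' k' * x ^ i' * y ^ j' * z ^ k')"
    by (intro sum.mono_neutral_cong_left) (auto simp: N_def intro!: sum.neutral)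
  finally show "a * x ^ i * y ^ j * z ^ k
      = (\<Sum>i'\<le>N. \<Sum>j'\<le>N. \<Sum>k'\<le>N. ?c i' j' k' * x ^ i' * y ^ j' * z ^ k')" .
qed

section \<open>Sup norm and Euclidean norm\<close>

lemma sup_norm_nonneg: "0 \<le> sup_norm d y"
  unfolding sup_norm_def by (intro Max_ge) auto

lemma abs_le_sup_norm: "i < d \<Longrightarrow> \<bar>y i\<bar> \<le> sup_norm d y"
  unfolding sup_norm_def by (intro Max_ge) auto

lemma sup_norm_attained:
  assumes "sup_norm d y > 0"
  obtains j where "j < d" "sup_norm d y = \<bar>y j\<bar>"
proof -
  have "sup_norm d y \<in> insert 0 ((\<lambda>i. \<bar>y i\<bar>) ` {..<d})"
    unfolding sup_norm_def by (intro Max_in) auto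
  then show ?thesis using assms that by auto
qed

lemma sup_norm_power_le_sum:
  assumes "m > 0"
  shows "sup_norm d y ^ m \<le> (\<Sum>i<d. \<bar>y i\<bar> ^ m)"
proof (cases "sup_norm d y > 0")
  case True
  then obtain j where "j < d" "sup_norm d y = \<bar>y j\<bar>" by (rule sup_norm_attained)
  then show ?thesis using member_le_sum[of j "{..<d}" "\<lambda>i. \<bar>y i\<bar> ^ m"] by simp
next
  case False
  then show ?thesis using sup_norm_nonneg[of d y] assms by (simp add: sum_nonneg zero_power)
qed

lemma l2_norm_sq_le: "(l2_norm d y)\<^sup>2 \<le> real d * (sup_norm d y)\<^sup>2"
proof -
  have "(l2_norm d y)\<^sup>2 = (\<Sum>i<d. (y i)\<^sup>2)"
    unfolding l2_norm_def by (simp add: sum_nonneg)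
  also have "\<dots> \<le> (\<Sum>i<d. (sup_norm d y)\<^sup>2)"
    by (intro sum_mono) (metis abs_le_sup_norm lessThan_iff abs_ge_zero power2_abs power_mono)
  finally show ?thesis by simp
qed

lemma sq_le_of_poly_growth:
  fixes p c2 lam :: real and N d :: nat
  assumes growth: "\<bar>p\<bar> \<le> c2 * (1 + l2_norm d y powr lam)"
    and lam: "0 \<le> lam" "2 * lam \<le> real N" and "d \<ge> 1"
  shows "p\<^sup>2 \<le> 4 * c2\<^sup>2 * real d ^ N * max 1 (sup_norm d y) ^ N"
proof -
  define s where "s = max 1 (sup_norm d y)"
  define l where "l = l2_norm d y"
  have s: "1 \<le> s" "sup_norm d y \<le> s" unfolding s_def by simp_all
  have d: "1 \<le> real d" using \<open>d \<ge> 1\<close> by simp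
  have "l\<^sup>2 \<le> real d * (sup_norm d y)\<^sup>2" unfolding l_def by (rule l2_norm_sq_le)
  also have "\<dots> \<le> real d * s\<^sup>2"
    using s sup_norm_nonneg[of d y] by (intro mult_left_mono power_mono) auto
  finally have "(l\<^sup>2) powr lam \<le> (real d * s\<^sup>2) powr lam"
    using lam by (intro powr_mono2) auto
  moreover have "(l\<^sup>2) powr lam = (l powr lam)\<^sup>2"
    unfolding power2_eq_square by (rule powr_mult)
  moreover have "(real d * s\<^sup>2) powr lam = real d powr lam * s powr (2 * lam)"
    unfolding powr_mult power2_eq_square mult_2 powr_add by simp
  moreover have "real d powr lam * s powr (2 * lam) \<le> real d ^ N * s ^ N"
  proof -
    have "real d powr lam \<le> real d powr real N" "s powr (2 * lam) \<le> s powr real N"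
      using d s lam by (auto intro!: powr_mono)
    then show ?thesis
      using d s by (simp add: powr_realpow mult_mono)
  qed
  ultimately have l: "(l powr lam)\<^sup>2 \<le> real d ^ N * s ^ N" by simp
  have one: "1 \<le> real d ^ N * s ^ N"
    using one_le_power[OF d] one_le_power[OF s(1)] by (metis mult_mono' mult_1 zero_le_one)
  have "p\<^sup>2 \<le> (c2 * (1 + l powr lam))\<^sup>2"
    using growth unfolding l_def by (metis abs_ge_zero power2_abs power_mono)
  also have "\<dots> \<le> c2\<^sup>2 * (2 * (1 + (l powr lam)\<^sup>2))"
    using zero_le_power2[of "l powr lam - 1"] unfolding power_mult_distrib
    by (intro mult_left_mono) (auto simp: power2_eq_square algebra_simps)
  also have "\<dots> \<le> c2\<^sup>2 * (4 * (real d ^ N * s ^ N))"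
    using l one by (intro mult_left_mono) auto
  finally show ?thesis unfolding s_def by simp
qed

section \<open>Measurability and clipped ReLU networks\<close>

(* Components outside I are undefined on the whole space, hence measurable as well. *)
lemma measurable_PiM_component_all:
  assumes "X \<in> M \<rightarrow>\<^sub>M PiM I (\<lambda>_. lborel)"
  shows "(\<lambda>\<omega>. X \<omega> j) \<in> borel_measurable M"
proof (cases "j \<in> I")
  case True
  then show ?thesis
    using measurable_compose[OF assms measurable_component_singleton[of j I "\<lambda>_. lborel"]] by simp
next
  case False
  have "X \<omega> j = undefined" if "\<omega> \<in> space M" for \<omega>
    using measurable_space[OF assms that] False by (auto simp: space_PiM PiE_def extensional_def)
  then show ?thesis by (simp cong: measurable_cong)
qed

lemma borel_measurable_sup_norm[measurable]:
  assumes [measurable]: "\<And>i. i < d \<Longrightarrow> (\<lambda>\<omega>. Y \<omega> i) \<in> borel_measurable M"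
  shows "(\<lambda>\<omega>. sup_norm d (Y \<omega>)) \<in> borel_measurable M"
proof -
  have "sup_norm d y = Max ((\<lambda>i. if i < d then \<bar>y i\<bar> else 0) ` {..d})" for y
    unfolding sup_norm_def by (rule arg_cong[where f = Max]) (auto simp: image_iff)
  moreover have "(\<lambda>\<omega>. if i < d then \<bar>Y \<omega> i\<bar> else 0) \<in> borel_measurable M" for i
    by (cases "i < d") simp_all
  ultimately show ?thesis
    by (simp only:) (rule borel_measurable_Max[where f = "\<lambda>i \<omega>. if i < d then \<bar>Y \<omega> i\<bar> else 0"], auto)
qed

lemma borel_measurable_realize:
  assumes "\<And>j. (\<lambda>\<omega>. Z \<omega> j) \<in> borel_measurable M"
  shows "(\<lambda>\<omega>. realize ns Ls (Z \<omega>) i) \<in> borel_measurable M"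
  using assms
proof (induction Ls arbitrary: ns Z i)
  case (Cons L Ls)
  have affine_layer: "(\<lambda>\<omega>. affine n L (Z \<omega>) j) \<in> borel_measurable M" for n j
    unfolding affine_def using Cons.prems by measurable
  then have "(\<lambda>\<omega>. relu_vec (affine n L (Z \<omega>)) j) \<in> borel_measurable M" for n j
    unfolding relu_vec_def by measurable
  then show ?case
    using Cons.IH affine_layer Cons.prems by (cases ns; cases Ls) auto
qed (cases ns; simp)

lemma NN_clip_abs_le: "f \<in> NN_clip a R D \<Longrightarrow> 0 \<le> D \<Longrightarrow> \<bar>f x\<bar> \<le> D"
  unfolding NN_clip_def clip_def by (auto simp: abs_mult abs_sgn_eq)

lemma NN_clip_measurable_comp:
  assumes "f \<in> NN_clip a R D" and "X \<in> M \<rightarrow>\<^sub>M PiM I (\<lambda>_. lborel)"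
  shows "(\<lambda>\<omega>. f (X \<omega>)) \<in> borel_measurable M"
proof -
  obtain \<theta> where f: "f = (\<lambda>x. clip D (realize a \<theta> x 0))"
    using assms(1) unfolding NN_clip_def by auto
  have "(\<lambda>\<omega>. realize a \<theta> (X \<omega>) 0) \<in> borel_measurable M"
    by (intro borel_measurable_realize measurable_PiM_component_all[OF assms(2)])
  then show ?thesis unfolding f clip_def by measurable
qed

section \<open>Moments from log-normal tails\<close>

(* On {n + 1 <= |z| < n + 2} we have |z|^m <= (n + 2)^m, and 2 exp (- c (ln (n + 1))^2) is the
   tail bound for the event {|Z| >= n + 1}. *)
definition log_tail_moment :: "real \<Rightarrow> nat \<Rightarrow> real" where
  "log_tail_moment c m = 1 + (\<Sum>n. (real n + 2) ^ m * (2 * exp (- c * (ln (real n + 1))\<^sup>2)))"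

lemma exp_neg_ln_sq_le_inverse_power:
  fixes c x :: real
  assumes "c > 0" and x: "exp (real k / c) \<le> x"
  shows "exp (- c * (ln x)\<^sup>2) \<le> inverse (x ^ k)"
proof -
  have x1: "1 \<le> x" using \<open>c > 0\<close> by (intro order_trans[OF _ x]) simp
  then have "real k / c \<le> ln x" using x by (simp add: ln_ge_iff)
  then have "real k \<le> c * ln x" using \<open>c > 0\<close> by (simp add: field_simps)
  from mult_right_mono[OF this] x1 have "real k * ln x \<le> c * (ln x)\<^sup>2"
    by (simp add: power2_eq_square mult.assoc)
  then have "exp (- c * (ln x)\<^sup>2) \<le> exp (- (real k * ln x))" by simp
  also have "\<dots> = inverse (x ^ k)"
    using x1 by (simp only: exp_minus exp_of_nat_mult) simp
  finally show ?thesis .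
qed

lemma summable_log_tail_moment:
  assumes "c > 0"
  shows "summable (\<lambda>n. (real n + 2) ^ m * (2 * exp (- c * (ln (real n + 1))\<^sup>2)))"
proof (rule summable_comparison_test_ev)
  have "summable (\<lambda>n. inverse (real (Suc n) ^ 2))"
    using inverse_power_summable[of 2, where 'a=real] by (subst summable_Suc_iff) simp
  then show "summable (\<lambda>n. 2 * 2 ^ m * inverse ((real n + 1) ^ 2))"
    by (intro summable_mult) (simp add: add.commute)
  obtain N :: nat where N: "exp (real (m + 2) / c) \<le> real N"
    using real_arch_simple by blast
  have "(real n + 2) ^ m * (2 * exp (- c * (ln (real n + 1))\<^sup>2))
      \<le> 2 * 2 ^ m * inverse ((real n + 1) ^ 2)" if "N \<le> n" for n
  proof -
    define x where "x = real n + 1"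
    have "x > 0" unfolding x_def by simp
    have "(real n + 2) ^ m \<le> (2 * x) ^ m"
      unfolding x_def by (intro power_mono) auto
    moreover have "exp (- c * (ln x)\<^sup>2) \<le> inverse (x ^ (m + 2))"
      using N that \<open>c > 0\<close> unfolding x_def by (intro exp_neg_ln_sq_le_inverse_power) auto
    ultimately have "(real n + 2) ^ m * (2 * exp (- c * (ln x)\<^sup>2))
        \<le> (2 * x) ^ m * (2 * inverse (x ^ (m + 2)))"
      using \<open>x > 0\<close> by (intro mult_mono) auto
    also have "\<dots> = 2 * 2 ^ m * inverse (x ^ 2)"
      using \<open>x > 0\<close> by (simp add: power_add power_mult_distrib field_simps power2_eq_square)
    finally show ?thesis unfolding x_def .
  qed
  then show "\<forall>\<^sub>F n in sequentially. norm ((real n + 2) ^ m * (2 * exp (- c * (ln (real n + 1))\<^sup>2)))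
      \<le> 2 * 2 ^ m * inverse ((real n + 1) ^ 2)"
    by (intro eventually_sequentiallyI[of N]) simp
qed

lemma log_tail_moment_ge_1: "c > 0 \<Longrightarrow> 1 \<le> log_tail_moment c m"
  unfolding log_tail_moment_def
  by (intro le_add_same_cancel1[THEN iffD2] suminf_nonneg summable_log_tail_moment) auto

lemma abs_power_le_step_suminf:
  fixes z :: real
  shows "ennreal (\<bar>z\<bar> ^ m)
    \<le> 1 + (\<Sum>n. ennreal ((real n + 2) ^ m) * indicator {t. real n + 1 \<le> \<bar>t\<bar>} z)"
proof (cases "\<bar>z\<bar> < 1")
  case True
  then have "\<bar>z\<bar> ^ m \<le> 1" by (intro power_le_one) auto
  then show ?thesis by (simp add: add_increasing2)
next
  case False
  define k where "k = nat \<lfloor>\<bar>z\<bar>\<rfloor> - 1"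
  have k: "real k + 1 \<le> \<bar>z\<bar>" "\<bar>z\<bar> < real k + 2"
    using False unfolding k_def by auto linarith+
  then have "ennreal (\<bar>z\<bar> ^ m) \<le> ennreal ((real k + 2) ^ m) * indicator {t. real k + 1 \<le> \<bar>t\<bar>} z"
    by (auto intro!: ennreal_leI power_mono)
  also have "\<dots> \<le> (\<Sum>n. ennreal ((real n + 2) ^ m) * indicator {t. real n + 1 \<le> \<bar>t\<bar>} z)"
    using sum_le_suminf[OF summableI, of "{k}"] by simp
  finally show ?thesis by (simp add: add_increasing)
qed

lemma (in prob_space) nn_integral_power_le_log_tail_moment:
  assumes Z[measurable]: "Z \<in> borel_measurable M" and "c > 0"
    and tail: "\<And>t. t \<ge> 1 \<Longrightarrow> prob {\<omega>\<in>space M. t \<le> \<bar>Z \<omega>\<bar>} \<le> 2 * exp (- c * (ln t)\<^sup>2)"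
  shows "(\<integral>\<^sup>+\<omega>. ennreal (\<bar>Z \<omega>\<bar> ^ m) \<partial>M) \<le> ennreal (log_tail_moment c m)"
proof -
  define a where "a n = (real n + 2) ^ m" for n :: nat
  define q where "q n = 2 * exp (- c * (ln (real n + 1))\<^sup>2)" for n :: nat
  define A where "A n = {\<omega>\<in>space M. real n + 1 \<le> \<bar>Z \<omega>\<bar>}" for n :: nat
  have A[measurable]: "A n \<in> sets M" for n
    unfolding A_def by measurable
  have "(\<integral>\<^sup>+\<omega>. ennreal (\<bar>Z \<omega>\<bar> ^ m) \<partial>M)
      \<le> (\<integral>\<^sup>+\<omega>. 1 + (\<Sum>n. ennreal (a n) * indicator (A n) \<omega>) \<partial>M)"
    using abs_power_le_step_suminf[of "Z _" m]
    by (intro nn_integral_mono) (simp add: a_def A_def indicator_def)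
  also have "\<dots> = 1 + (\<Sum>n. ennreal (a n) * emeasure M (A n))"
    by (simp add: nn_integral_add nn_integral_suminf emeasure_space_1 nn_integral_cmult_indicator
        del: nn_integral_indicator_singleton)
  also have "\<dots> \<le> 1 + (\<Sum>n. ennreal (a n * q n))"
    using tail[of "real n + 1" for n]
    by (intro add_left_mono suminf_le)
       (auto simp: A_def a_def q_def emeasure_eq_measure ennreal_mult'[symmetric] mult_left_mono)
  also have "\<dots> = ennreal (log_tail_moment c m)"
    using summable_log_tail_moment[OF \<open>c > 0\<close>, of m]
    by (simp add: log_tail_moment_def a_def q_def suminf_ennreal2 suminf_nonneg)
  finally show ?thesis .
qed

lemma (in prob_space) integrable_power_of_log_tail:
  assumes "Z \<in> borel_measurable M" and "c > 0"
    and "\<And>t. t \<ge> 1 \<Longrightarrow> prob {\<omega>\<in>space M. t \<le> \<bar>Z \<omega>\<bar>} \<le> 2 * exp (- c * (ln t)\<^sup>2)"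
  shows "integrable M (\<lambda>\<omega>. \<bar>Z \<omega>\<bar> ^ m)"
    and "(\<integral>\<omega>. \<bar>Z \<omega>\<bar> ^ m \<partial>M) \<le> log_tail_moment c m"
proof -
  note bound = nn_integral_power_le_log_tail_moment[OF assms, of m]
  show int: "integrable M (\<lambda>\<omega>. \<bar>Z \<omega>\<bar> ^ m)"
    using assms(1) bound by (intro integrableI_bounded) (auto simp: power_abs top.not_eq_extremum le_less_trans)
  have "ennreal (\<integral>\<omega>. \<bar>Z \<omega>\<bar> ^ m \<partial>M) = (\<integral>\<^sup>+\<omega>. ennreal (\<bar>Z \<omega>\<bar> ^ m) \<partial>M)"
    using int by (intro nn_integral_eq_integral[symmetric]) auto
  with bound have "ennreal (\<integral>\<omega>. \<bar>Z \<omega>\<bar> ^ m \<partial>M) \<le> ennreal (log_tail_moment c m)"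
    by simp
  then show "(\<integral>\<omega>. \<bar>Z \<omega>\<bar> ^ m \<partial>M) \<le> log_tail_moment c m"
    using log_tail_moment_ge_1[OF \<open>c > 0\<close>, of m] by simp
qed

section \<open>The truncation error\<close>

lemma sq_diff_le: "(a - b)\<^sup>2 \<le> 2 * a\<^sup>2 + 2 * b\<^sup>2" for a b :: real
  using zero_le_power2[of "a + b"] unfolding power2_diff power2_sum by linarith

lemma max_1_power_le:
  fixes s g :: real
  assumes "0 \<le> s" "s ^ (N + 1) \<le> g"
  shows "max 1 s ^ N \<le> 1 + g"
proof (cases "s \<le> 1")
  case True
  moreover have "0 \<le> g"
    using assms(2) zero_le_power[OF assms(1), of "N + 1"] by linarith
  ultimately show ?thesis by simp
next
  case False
  then have "max 1 s ^ N \<le> s ^ (N + 1)" by (simp add: power_increasing)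
  then show ?thesis using assms(2) by simp
qed

lemma truncated_sq_loss_diff_le:
  fixes F p s K D B :: real
  assumes F: "\<bar>F\<bar> \<le> D" and K: "1 \<le> K" and s: "0 \<le> s"
    and p: "p\<^sup>2 \<le> B * max 1 s ^ N" and B: "0 \<le> B"
  shows "\<bar>(F - (if s \<le> K then p else 0))\<^sup>2 - (F - p)\<^sup>2\<bar> \<le> (D\<^sup>2 + 2 * B) / K * s ^ (N + 1)"
proof (cases "s \<le> K")
  case True
  then show ?thesis using B K s by simp
next
  case False
  then have s1: "1 \<le> s" "K < s" using K by simp_all
  have F2: "F\<^sup>2 \<le> D\<^sup>2" using F by (metis abs_ge_zero power2_abs power_mono)
  have "\<bar>(F - (if s \<le> K then p else 0))\<^sup>2 - (F - p)\<^sup>2\<bar> = \<bar>2 * F * p - p\<^sup>2\<bar>"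
    using False by (simp add: power2_eq_square algebra_simps)
  also have "\<dots> \<le> F\<^sup>2 + 2 * p\<^sup>2"
    using zero_le_power2[of "F - p"] zero_le_power2[of "F + p"] zero_le_power2[of p]
    unfolding abs_le_iff power2_diff power2_sum by linarith
  also have "\<dots> \<le> D\<^sup>2 + 2 * B * s ^ N"
    using F2 p s1 by simp
  also have "\<dots> \<le> (D\<^sup>2 + 2 * B) * s ^ N"
    using s1 by (simp add: distrib_right mult_le_cancel_left1)
  also have "\<dots> \<le> (D\<^sup>2 + 2 * B) / K * s ^ (N + 1)"
  proof -
    have "s ^ N * K \<le> s ^ N * s" using s1 by (intro mult_left_mono) auto
    then have "s ^ N \<le> s ^ (N + 1) / K" using K by (simp add: field_simps)
    then have "(D\<^sup>2 + 2 * B) * s ^ N \<le> (D\<^sup>2 + 2 * B) * (s ^ (N + 1) / K)"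
      using B by (intro mult_left_mono) auto
    then show ?thesis by simp
  qed
  finally show ?thesis .
qed

lemma (in finite_measure) integrable_sq_diff_of_bounded:
  fixes F g h :: "'a \<Rightarrow> real"
  assumes g: "integrable M (\<lambda>\<omega>. (g \<omega>)\<^sup>2)"
    and [measurable]: "F \<in> borel_measurable M" "h \<in> borel_measurable M"
    and F: "\<And>\<omega>. \<bar>F \<omega>\<bar> \<le> D" and h: "\<And>\<omega>. \<bar>h \<omega>\<bar> \<le> \<bar>g \<omega>\<bar>"
  shows "integrable M (\<lambda>\<omega>. (F \<omega> - h \<omega>)\<^sup>2)"
proof (rule Bochner_Integration.integrable_bound)
  show "integrable M (\<lambda>\<omega>. 2 * D\<^sup>2 + 2 * (g \<omega>)\<^sup>2)"
    using g by simp
  have "(F \<omega> - h \<omega>)\<^sup>2 \<le> 2 * D\<^sup>2 + 2 * (g \<omega>)\<^sup>2" for \<omega>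
    using sq_diff_le[of "F \<omega>" "h \<omega>"] power_mono[OF F abs_ge_zero, of \<omega> 2]
      power_mono[OF h abs_ge_zero, of \<omega> 2] by simp
  then show "AE \<omega> in M. norm ((F \<omega> - h \<omega>)\<^sup>2) \<le> norm (2 * D\<^sup>2 + 2 * (g \<omega>)\<^sup>2)"
    by (intro AE_I2) (simp add: add_nonneg_nonneg)
qed simp

lemma abs_integral_diff_le:
  fixes f g b :: "'a \<Rightarrow> real"
  assumes "integrable M f" "integrable M g" "integrable M b"
    and "\<And>\<omega>. \<omega> \<in> space M \<Longrightarrow> \<bar>f \<omega> - g \<omega>\<bar> \<le> b \<omega>"
  shows "\<bar>(\<integral>\<omega>. f \<omega> \<partial>M) - (\<integral>\<omega>. g \<omega> \<partial>M)\<bar> \<le> (\<integral>\<omega>. b \<omega> \<partial>M)"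
proof -
  have "\<bar>(\<integral>\<omega>. f \<omega> \<partial>M) - (\<integral>\<omega>. g \<omega> \<partial>M)\<bar> = \<bar>\<integral>\<omega>. f \<omega> - g \<omega> \<partial>M\<bar>"
    using assms by simp
  also have "\<dots> \<le> (\<integral>\<omega>. \<bar>f \<omega> - g \<omega>\<bar> \<partial>M)"
    using integral_norm_bound[of M "\<lambda>\<omega>. f \<omega> - g \<omega>"] by simp
  also have "\<dots> \<le> (\<integral>\<omega>. b \<omega> \<partial>M)"
    using assms by (intro integral_mono_AE AE_I2) auto
  finally show ?thesis .
qed

lemma integral_sum_le:
  fixes f :: "'i \<Rightarrow> 'a \<Rightarrow> real"
  assumes "\<And>i. i \<in> I \<Longrightarrow> integrable M (f i)" and "\<And>i. i \<in> I \<Longrightarrow> (\<integral>\<omega>. f i \<omega> \<partial>M) \<le> C"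
  shows "(\<integral>\<omega>. (\<Sum>i\<in>I. f i \<omega>) \<partial>M) \<le> real (card I) * C"
  using assms sum_bounded_above[of I "\<lambda>i. \<integral>\<omega>. f i \<omega> \<partial>M" C]
  by (simp add: Bochner_Integration.integral_sum)

lemma (in prob_space) risk_trunc_diff_le:
  fixes f \<phi> :: "(nat \<Rightarrow> real) \<Rightarrow> real"
  assumes f_meas[measurable]: "(\<lambda>\<omega>. f (X \<omega>)) \<in> borel_measurable M"
    and f_bound: "\<And>x. \<bar>f x\<bar> \<le> D"
    and Y: "Y \<in> M \<rightarrow>\<^sub>M PiM {..<d} (\<lambda>_. lborel)"
    and \<phi>: "\<phi> \<in> borel_measurable (PiM {..<d} (\<lambda>_. lborel))"
    and growth: "\<And>\<omega>. \<omega> \<in> space M \<Longrightarrow> (\<phi> (Y \<omega>))\<^sup>2 \<le> B * max 1 (sup_norm d (Y \<omega>)) ^ N"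
    and B: "0 \<le> B"
    and moment_int: "\<And>i. i < d \<Longrightarrow> integrable M (\<lambda>\<omega>. \<bar>Y \<omega> i\<bar> ^ (N + 1))"
    and moment_le: "\<And>i. i < d \<Longrightarrow> (\<integral>\<omega>. \<bar>Y \<omega> i\<bar> ^ (N + 1) \<partial>M) \<le> C"
    and K: "1 \<le> K"
  shows "\<bar>risk M X Y (trunc d K \<phi>) f - risk M X Y \<phi> f\<bar> \<le> (D\<^sup>2 + 2 * B) / K * (real d * C)"
proof -
  have [measurable]: "(\<lambda>\<omega>. Y \<omega> i) \<in> borel_measurable M" for i
    using Y by (rule measurable_PiM_component_all)
  have [measurable]: "(\<lambda>\<omega>. \<phi> (Y \<omega>)) \<in> borel_measurable M"
    using measurable_compose[OF Y \<phi>] by (simp add: comp_def)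
  have [measurable]: "(\<lambda>\<omega>. trunc d K \<phi> (Y \<omega>)) \<in> borel_measurable M"
    unfolding trunc_def by measurable
  define G where "G \<omega> = (\<Sum>i<d. \<bar>Y \<omega> i\<bar> ^ (N + 1))" for \<omega>
  have sup_norm_pow: "sup_norm d (Y \<omega>) ^ (N + 1) \<le> G \<omega>" for \<omega>
    unfolding G_def by (rule sup_norm_power_le_sum) simp
  have G_int: "integrable M G"
    unfolding G_def using moment_int by (intro Bochner_Integration.integrable_sum) auto
  have G_le: "(\<integral>\<omega>. G \<omega> \<partial>M) \<le> real d * C"
    unfolding G_def using integral_sum_le[of "{..<d}", OF moment_int moment_le] by simp
  have "integrable M (\<lambda>\<omega>. (\<phi> (Y \<omega>))\<^sup>2)"
  proof (rule Bochner_Integration.integrable_bound)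
    show "integrable M (\<lambda>\<omega>. B * (1 + G \<omega>))"
      using G_int by simp
    have "(\<phi> (Y \<omega>))\<^sup>2 \<le> B * (1 + G \<omega>)" if "\<omega> \<in> space M" for \<omega>
      using growth[OF that] max_1_power_le[OF sup_norm_nonneg sup_norm_pow] B
      by (meson mult_left_mono order_trans)
    then show "AE \<omega> in M. norm ((\<phi> (Y \<omega>))\<^sup>2) \<le> norm (B * (1 + G \<omega>))"
      by (intro AE_I2) (auto intro: order_trans[OF _ abs_ge_self])
  qed simp
  then have "integrable M (\<lambda>\<omega>. (f (X \<omega>) - trunc d K \<phi> (Y \<omega>))\<^sup>2)"
    "integrable M (\<lambda>\<omega>. (f (X \<omega>) - \<phi> (Y \<omega>))\<^sup>2)"
    by (auto intro!: integrable_sq_diff_of_bounded f_bound simp: trunc_def)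
  moreover have "\<bar>(f (X \<omega>) - trunc d K \<phi> (Y \<omega>))\<^sup>2 - (f (X \<omega>) - \<phi> (Y \<omega>))\<^sup>2\<bar>
      \<le> (D\<^sup>2 + 2 * B) / K * G \<omega>" if "\<omega> \<in> space M" for \<omega>
  proof -
    have "\<bar>(f (X \<omega>) - trunc d K \<phi> (Y \<omega>))\<^sup>2 - (f (X \<omega>) - \<phi> (Y \<omega>))\<^sup>2\<bar>
        \<le> (D\<^sup>2 + 2 * B) / K * sup_norm d (Y \<omega>) ^ (N + 1)"
      unfolding trunc_def
      by (rule truncated_sq_loss_diff_le[OF f_bound K sup_norm_nonneg growth[OF that] B])
    also have "\<dots> \<le> (D\<^sup>2 + 2 * B) / K * G \<omega>"
      using sup_norm_pow B K by (intro mult_left_mono) auto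
    finally show ?thesis .
  qed
  ultimately have "\<bar>risk M X Y (trunc d K \<phi>) f - risk M X Y \<phi> f\<bar> \<le> (\<integral>\<omega>. (D\<^sup>2 + 2 * B) / K * G \<omega> \<partial>M)"
    unfolding risk_def using G_int by (intro abs_integral_diff_le) auto
  also have "\<dots> \<le> (D\<^sup>2 + 2 * B) / K * (real d * C)"
    using G_le B K by (simp add: mult_left_mono divide_right_mono)
  finally show ?thesis .
qed

lemma (in prob_space) NN_clip_risk_trunc_diff_le:
  assumes X: "X \<in> M \<rightarrow>\<^sub>M PiM {..<d} (\<lambda>_. lborel)"
    and Y: "Y \<in> M \<rightarrow>\<^sub>M PiM {..<d} (\<lambda>_. lborel)"
    and \<phi>: "\<phi> \<in> borel_measurable (PiM {..<d} (\<lambda>_. lborel))"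
    and "c1 > 0"
    and tail: "\<And>i t. i < d \<Longrightarrow> 1 \<le> t \<Longrightarrow>
      prob {\<omega> \<in> space M. t \<le> \<bar>Y \<omega> i\<bar>} \<le> 2 * exp (- c1 * (ln t)\<^sup>2)"
    and growth: "\<And>y. y \<in> PiE {..<d} (\<lambda>_. UNIV) \<Longrightarrow> \<bar>\<phi> y\<bar> \<le> c2 * (1 + l2_norm d y powr lam)"
    and lam: "0 \<le> lam" "2 * lam \<le> real N" and "d \<ge> 1"
    and f: "f \<in> NN_clip a R D" and "0 \<le> D" and "1 \<le> K"
  shows "\<bar>risk M X Y (trunc d K \<phi>) f - risk M X Y \<phi> f\<bar>
    \<le> (D\<^sup>2 + 8 * c2\<^sup>2 * real d ^ N) / K * (real d * log_tail_moment c1 (N + 1))"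
proof -
  have "\<bar>risk M X Y (trunc d K \<phi>) f - risk M X Y \<phi> f\<bar>
    \<le> (D\<^sup>2 + 2 * (4 * c2\<^sup>2 * real d ^ N)) / K * (real d * log_tail_moment c1 (N + 1))"
  proof (rule risk_trunc_diff_le[OF NN_clip_measurable_comp[OF f X] NN_clip_abs_le[OF f \<open>0 \<le> D\<close>] Y \<phi>])
    show "(\<phi> (Y \<omega>))\<^sup>2 \<le> 4 * c2\<^sup>2 * real d ^ N * max 1 (sup_norm d (Y \<omega>)) ^ N"
      if "\<omega> \<in> space M" for \<omega>
      using measurable_space[OF Y that] growth lam \<open>d \<ge> 1\<close>
      by (intro sq_le_of_poly_growth) (auto simp: space_PiM)
    show "integrable M (\<lambda>\<omega>. \<bar>Y \<omega> i\<bar> ^ (N + 1))"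
      "(\<integral>\<omega>. \<bar>Y \<omega> i\<bar> ^ (N + 1) \<partial>M) \<le> log_tail_moment c1 (N + 1)" if "i < d" for i
      using integrable_power_of_log_tail[OF measurable_PiM_component_all[OF Y] \<open>c1 > 0\<close> tail[OF that]]
      by blast+
  qed (use \<open>1 \<le> K\<close> in simp_all)
  then show ?thesis by (simp add: mult.assoc)
qed

theorem proposition3p6:
  fixes u v c1 c2 lam :: real
    and M :: "nat \<Rightarrow> 'a measure"
    and X Y :: "nat \<Rightarrow> 'a \<Rightarrow> nat \<Rightarrow> real"
    and \<phi> :: "nat \<Rightarrow> (nat \<Rightarrow> real) \<Rightarrow> real"
  assumes "u < v"
    and "\<forall>d\<ge>1. prob_space (M d)"
    and "\<forall>d\<ge>1. X d \<in> M d \<rightarrow>\<^sub>M PiM {..<d} (\<lambda>_. lborel)"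
    and "\<forall>d\<ge>1. distr (M d) (PiM {..<d} (\<lambda>_. lborel)) (X d)
                = uniform_measure (PiM {..<d} (\<lambda>_. lborel)) (PiE {..<d} (\<lambda>_. {u..v}))"
    and "\<forall>d\<ge>1. Y d \<in> M d \<rightarrow>\<^sub>M PiM {..<d} (\<lambda>_. lborel)"
    and "\<forall>d\<ge>1. \<phi> d \<in> borel_measurable (PiM {..<d} (\<lambda>_. lborel))"
    and "c1 > 0"
    and cond_i: "\<forall>d\<ge>1. \<forall>t\<ge>1. \<forall>i<d.
           measure (M d) {\<omega> \<in> space (M d). \<bar>Y d \<omega> i\<bar> \<ge> t} \<le> 2 * exp (- c1 * (ln t)\<^sup>2)"
    and "c2 > 0" and "lam \<ge> 2"
    and cond_ii: "\<forall>d\<ge>1. \<forall>y \<in> PiE {..<d} (\<lambda>_. UNIV).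
           \<bar>\<phi> d y\<bar> \<le> c2 * (1 + l2_norm d y powr lam)"
  shows "\<exists>h1. is_poly3 h1 \<and>
     (\<forall>d\<ge>1. \<forall>a R K D \<epsilon>. valid_arch d a \<and> R > 0 \<and> K \<ge> 1 \<and> D \<ge> 1 \<and> 0 < \<epsilon> \<and> \<epsilon> < 1
        \<and> K \<ge> h1 (1 / \<epsilon>) (real d) D \<longrightarrow>
        (\<forall>f \<in> NN_clip a R D.
           \<bar>risk (M d) (X d) (Y d) (trunc d K (\<phi> d)) f - risk (M d) (X d) (Y d) (\<phi> d) f\<bar> \<le> \<epsilon>))"
proof -
  define N where "N = nat \<lceil>2 * lam\<rceil>"
  define C where "C = log_tail_moment c1 (N + 1)"
  define h1 where "h1 x y z = C * x * y * z\<^sup>2 + 8 * c2\<^sup>2 * C * x * y ^ (N + 1)" for x y z :: real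
  have N: "2 * lam \<le> real N" unfolding N_def by linarith
  have "h1 = (\<lambda>x y z. C * x ^ 1 * y ^ 1 * z ^ 2 + (8 * c2\<^sup>2 * C) * x ^ 1 * y ^ (N + 1) * z ^ 0)"
    by (simp add: h1_def fun_eq_iff)
  then have "is_poly3 h1" by (simp only:) (intro is_poly3_add is_poly3_monomial)
  moreover have "\<bar>risk (M d) (X d) (Y d) (trunc d K (\<phi> d)) f - risk (M d) (X d) (Y d) (\<phi> d) f\<bar> \<le> \<epsilon>"
    if d: "d \<ge> 1" and K: "K \<ge> 1" "K \<ge> h1 (1 / \<epsilon>) (real d) D" and "D \<ge> 1" "0 < \<epsilon>"
      and f: "f \<in> NN_clip a R D" for d a R K D \<epsilon> f
  proof -
    interpret prob_space "M d" using assms(2) d by simp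
    have "\<bar>risk (M d) (X d) (Y d) (trunc d K (\<phi> d)) f - risk (M d) (X d) (Y d) (\<phi> d) f\<bar>
        \<le> (D\<^sup>2 + 8 * c2\<^sup>2 * real d ^ N) / K * (real d * C)"
      unfolding C_def using assms(3,5,6,10) cond_i cond_ii d \<open>D \<ge> 1\<close> K N
      by (intro NN_clip_risk_trunc_diff_le[OF _ _ _ assms(7) _ _ _ _ _ f]) auto
    also have "\<dots> = h1 (1 / \<epsilon>) (real d) D * \<epsilon> / K"
      using K \<open>0 < \<epsilon>\<close> by (simp add: h1_def field_simps)
    also have "\<dots> \<le> \<epsilon>"
      using K \<open>0 < \<epsilon>\<close> by (simp add: field_simps mult_right_mono)
    finally show ?thesis .
  qed
  ultimately show ?thesis by blast
qed

end
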